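(* Let $p$ be a prime and $n,k$ positive integers with $(p,k-1)=1$ and $n=\mathrm{ind}_p(k)$; let $G=G(p,n,k)=\langle a,b;\ a^p=1,\ b^n=1,\ b^{-1}ab=a^k\rangle$ and let $S\subseteq\mathbb{Z}_p$ be a base. Then $\Sigma_G(S)$ is complete.
   Context: $\mathrm{ind}_p(k)$ is the least positive integer $d$ with $k^d\equiv 1\pmod p$. Elements of $G$ are written uniquely as $a^ib^j$, $i\in\mathbb{Z}_p$, $j\in\mathbb{Z}_n$; $k_t=k^t-1\pmod p$. Maps are written on the right and composed left to right. For $x,y\in\mathbb{Z}_p$, $\mu(x,y):G\to G$ is $(a^ib^j)\mu(x,y)=a^{xik^j-yk_j}$, and $C(x,y)=\{\mu(x,yz):z\in\mathbb{Z}_p\}$. For $S\subseteq\mathbb{Z}_p$, $I(S)$ is the set of invertible elements of $S$ and $S^*$ is the multiplicative subsemigroup of $\mathbb{Z}_p$ generated by $S$. A base is $S\subseteq \mathbb{Z}_p$ with $0\in S$ and $I(S)\ne\varnothing$. $\Sigma_G(S)$ is the semigroup under composition generated by $\{\mu(s,z):s\in S,z\in\mathbb{Z}_p\}$. For $x\in S^*$, $Y(x)=\{s^*z: s^*\in S^*, z\in\mathbb{Z}_p, \exists s\in S,\ x\equiv ss^*\}$, $\mathcal{F}_G(x,S)=\{C(x,y):y\in Y(x)\}$; this family is complete if $C(x,1)\in\mathcal{F}_G(x,S)$, and $\Sigma_G(S)$ is complete if every $x$-family ($x\in S^*$) is complete. *)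

theory Defs
  imports "HOL-Number_Theory.Number_Theory" "HOL-Library.FuncSet"
begin

text \<open>Elements of G = G(p,n,k) are written uniquely as a^i b^j with i in Z_p, j in Z_n;
  we represent a^i b^j by the pair (i, j) with 0 <= i < p, 0 <= j < n.\<close>

definition Gcar :: "nat \<Rightarrow> nat \<Rightarrow> (int \<times> nat) set" where
  "Gcar p n = {0..<int p} \<times> {0..<n}"

text \<open>mu(x,y): a^i b^j maps to a^(x i k^j - y k_j), where k_j = k^j - 1 (mod p);
  the result a^m is represented by (m mod p, 0).  Maps are restricted to G.\<close>

definition mu :: "nat \<Rightarrow> nat \<Rightarrow> nat \<Rightarrow> int \<Rightarrow> int \<Rightarrow> (int \<times> nat \<Rightarrow> int \<times> nat)" where
  "mu p n k x y = (\<lambda>g\<in>Gcar p n. case g of (i, j) \<Rightarrow>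
      ((x * i * int k ^ j - y * ((int k ^ j - 1) mod int p)) mod int p, 0))"

definition Cset :: "nat \<Rightarrow> nat \<Rightarrow> nat \<Rightarrow> int \<Rightarrow> int \<Rightarrow> (int \<times> nat \<Rightarrow> int \<times> nat) set" where
  "Cset p n k x y = {mu p n k x ((y * z) mod int p) | z. z \<in> {0..<int p}}"

inductive_set Sstar :: "nat \<Rightarrow> int set \<Rightarrow> int set" for p S where
  gen: "s \<in> S \<Longrightarrow> s \<in> Sstar p S"
| mult: "a \<in> Sstar p S \<Longrightarrow> b \<in> Sstar p S \<Longrightarrow> (a * b) mod int p \<in> Sstar p S"

definition is_base :: "nat \<Rightarrow> int set \<Rightarrow> bool" where
  "is_base p S \<longleftrightarrow> S \<subseteq> {0..<int p} \<and> 0 \<in> S \<and> (\<exists>s\<in>S. coprime s (int p))"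

definition Yset :: "nat \<Rightarrow> int set \<Rightarrow> int \<Rightarrow> int set" where
  "Yset p S x = {(t * z) mod int p | t z. t \<in> Sstar p S \<and> z \<in> {0..<int p} \<and>
      (\<exists>s\<in>S. [x = s * t] (mod int p))}"

definition family :: "nat \<Rightarrow> nat \<Rightarrow> nat \<Rightarrow> int set \<Rightarrow> int \<Rightarrow> (int \<times> nat \<Rightarrow> int \<times> nat) set set" where
  "family p n k S x = {Cset p n k x y | y. y \<in> Yset p S x}"

definition family_complete :: "nat \<Rightarrow> nat \<Rightarrow> nat \<Rightarrow> int set \<Rightarrow> int \<Rightarrow> bool" where
  "family_complete p n k S x \<longleftrightarrow> Cset p n k x 1 \<in> family p n k S x"

definition Sigma_complete :: "nat \<Rightarrow> nat \<Rightarrow> nat \<Rightarrow> int set \<Rightarrow> bool" where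
  "Sigma_complete p n k S \<longleftrightarrow> (\<forall>x\<in>Sstar p S. family_complete p n k S x)"

end

theory Submission
  imports Defs
begin

text \<open>A family is complete as soon as 1 lies in Y(x), since C(x,1) is then the member indexed
  by y = 1.  By Fermat, a base element u invertible mod p satisfies u^(p-1) = 1, so 1 lies in
  S^*; hence every x in S^* factors as x = s s^* with s in S and s^* in S^*.  If p divides x,
  take s = 0 and s^* = z = 1; otherwise s^* is invertible mod p and z = (s^*)^(-1) gives
  s^* z = 1.  The group G enters only through the maps mu.\<close>

lemma Sstar_subset_residues:
  assumes "S \<subseteq> {0..<int p}" and "p > 0"
  shows "Sstar p S \<subseteq> {0..<int p}"
proof
  fix a assume "a \<in> Sstar p S"
  then show "a \<in> {0..<int p}"
    by induction (use assms in auto)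
qed

lemma Sstar_power:
  assumes "S \<subseteq> {0..<int p}" and "p > 0" and a: "a \<in> Sstar p S"
  shows "a ^ Suc m mod int p \<in> Sstar p S"
proof (induction m)
  case 0
  have "a mod int p = a"
    using Sstar_subset_residues[OF assms(1,2)] a by auto
  with a show ?case by simp
next
  case (Suc m)
  have "(a ^ Suc m mod int p) * a mod int p = a ^ Suc (Suc m) mod int p"
    by (metis mod_mult_left_eq power_Suc2)
  with Sstar.mult[OF Suc a] show ?case by simp
qed

lemma fermat_theorem_int:
  assumes "prime p" and "coprime u (int p)"
  shows "[u ^ (p - 1) = 1] (mod int p)"
proof -
  define r where "r = nat (u mod int p)"
  have r: "int r = u mod int p"
    using prime_gt_0_nat[OF assms(1)] unfolding r_def by simp
  have "\<not> int p dvd u mod int p"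
    using assms by (simp add: dvd_mod_iff residues_prime.p_coprime_right_int residues_prime_def)
  then have "\<not> p dvd r"
    using r by (metis of_nat_dvd_iff)
  then have "[r ^ (p - 1) = 1] (mod p)"
    using fermat_theorem[OF assms(1)] by blast
  then have "[(u mod int p) ^ (p - 1) = 1] (mod int p)"
    by (metis r cong_int_iff of_nat_1 of_nat_power)
  moreover have "[(u mod int p) ^ (p - 1) = u ^ (p - 1)] (mod int p)"
    by (simp add: cong_def power_mod)
  ultimately show ?thesis
    using cong_sym cong_trans by blast
qed

lemma one_in_Sstar:
  assumes "prime p" and "is_base p S"
  shows "1 \<in> Sstar p S"
proof -
  obtain u where u: "u \<in> S" "coprime u (int p)" and S: "S \<subseteq> {0..<int p}"
    using assms(2) unfolding is_base_def by auto
  have p: "p > 1" using prime_gt_1_nat[OF assms(1)] .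
  have "u ^ Suc (p - 2) mod int p \<in> Sstar p S"
    using Sstar_power[OF S _ Sstar.gen[OF u(1)]] p by simp
  moreover have "u ^ (p - 1) mod int p = 1"
    using fermat_theorem_int[OF assms(1) u(2)] p by (simp add: cong_def)
  moreover have "Suc (p - 2) = p - 1" using p by simp
  ultimately show ?thesis by simp
qed

lemma Sstar_factor:
  assumes "x \<in> Sstar p S" and "1 \<in> Sstar p S"
  shows "\<exists>s\<in>S. \<exists>t\<in>Sstar p S. [x = s * t] (mod int p)"
  using assms(1)
proof induction
  case (gen s)
  with assms(2) show ?case by (intro bexI[of _ s] bexI[of _ 1]) auto
next
  case (mult a b)
  then obtain s t where st: "s \<in> S" "t \<in> Sstar p S" "[a = s * t] (mod int p)"
    by blast
  have "[a * b mod int p = s * (t * b mod int p)] (mod int p)"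
    using cong_mult[OF st(3) cong_refl[of b]]
    by (simp add: cong_def mod_mult_right_eq mult.assoc)
  with st(1) Sstar.mult[OF st(2) mult(2)] show ?case by blast
qed

lemma one_in_Yset:
  assumes "prime p" and "is_base p S" and "x \<in> Sstar p S"
  shows "1 \<in> Yset p S x"
proof -
  have one: "1 \<in> Sstar p S" using one_in_Sstar[OF assms(1,2)] .
  have p: "int p > 1" using prime_gt_1_nat[OF assms(1)] by simp
  show ?thesis
  proof (cases "int p dvd x")
    case True
    have "0 \<in> S" using assms(2) unfolding is_base_def by auto
    moreover have "[x = 0 * 1] (mod int p)" using True by (simp add: cong_0_iff)
    ultimately have "1 * 1 mod int p \<in> Yset p S x"
      unfolding Yset_def using one p by fastforce
    then show ?thesis using p by simp
  next
    case False
    obtain s t where st: "s \<in> S" "t \<in> Sstar p S" "[x = s * t] (mod int p)"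
      using Sstar_factor[OF assms(3) one] by blast
    have "\<not> int p dvd t"
      using st(3) False by (metis cong_dvd_iff dvd_mult)
    then have "coprime t (int p)"
      using assms(1) by (metis coprime_commute prime_imp_coprime prime_nat_int_transfer)
    then obtain z where "[t * z = 1] (mod int p)"
      using cong_solve_coprime_int by blast
    then have "t * (z mod int p) mod int p = 1"
      using p by (simp add: cong_def mod_mult_right_eq)
    moreover have "z mod int p \<in> {0..<int p}" using p by simp
    ultimately show ?thesis
      unfolding Yset_def using st by fastforce
  qed
qed

theorem theorem6p1:
  fixes p n k :: nat and S :: "int set"
  assumes "prime p" and "n > 0" and "k > 0"
    and "coprime p (k - 1)"
    and "n = ord p k"
    and "is_base p S"
  shows "Sigma_complete p n k S"
  unfolding Sigma_complete_def family_complete_def family_def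
  using one_in_Yset[OF assms(1) assms(6)] by blast

end
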